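(* Let $\mathcal{C}$ be a binary linear code with minimum distance $d(\mathcal{C}) \ge 3$. Then $$\rho(\mathcal{C}) \le \binom{r(\mathcal{C})}{1} + \binom{r(\mathcal{C})}{2} + \cdots + \binom{r(\mathcal{C})}{d(\mathcal{C})-2}.$$
   Context: A parity-check matrix for a linear code $\mathcal{C}$ is any matrix (possibly with linearly dependent rows) whose rows span the dual code $\mathcal{C}^\perp$. $d(\mathcal{C})$ is the minimum Hamming distance. For a parity-check matrix $H$, the stopping distance $s(H)$ is the largest integer such that for every set of $s(H)-1$ or fewer columns of $H$, the projection of $H$ onto those columns contains at least one row of Hamming weight exactly one. The redundancy $r(\mathcal{C})$ is the minimum number of rows of a parity-check matrix for $\mathcal{C}$. The stopping redundancy $\rho(\mathcal{C})$ is the smallest number of rows of a parity-check matrix $H$ for $\mathcal{C}$ with $s(H) = d(\mathcal{C})$. *)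

theory Defs
  imports Main "HOL-Library.Z2" "HOL-Library.Function_Algebras"
begin

text \<open>Binary vectors of length n: functions nat => bit (GF(2)) vanishing outside {..<n}.\<close>

definition bvecs :: "nat \<Rightarrow> (nat \<Rightarrow> bit) set" where
  "bvecs n = {v. \<forall>i. n \<le> i \<longrightarrow> v i = 0}"

definition binary_linear_code :: "nat \<Rightarrow> (nat \<Rightarrow> bit) set \<Rightarrow> bool" where
  "binary_linear_code n C \<longleftrightarrow> C \<subseteq> bvecs n \<and> (\<lambda>_. 0) \<in> C \<and>
     (\<forall>x\<in>C. \<forall>y\<in>C. x + y \<in> C) \<and> (\<forall>a::bit. \<forall>x\<in>C. (\<lambda>i. a * x i) \<in> C)"

definition hamming_weight :: "nat \<Rightarrow> (nat \<Rightarrow> bit) \<Rightarrow> nat" where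
  "hamming_weight n v = card {i. i < n \<and> v i \<noteq> 0}"

definition hamming_dist :: "nat \<Rightarrow> (nat \<Rightarrow> bit) \<Rightarrow> (nat \<Rightarrow> bit) \<Rightarrow> nat" where
  "hamming_dist n x y = card {i. i < n \<and> x i \<noteq> y i}"

definition min_dist :: "nat \<Rightarrow> (nat \<Rightarrow> bit) set \<Rightarrow> nat" where
  "min_dist n C = Inf {hamming_dist n x y | x y. x \<in> C \<and> y \<in> C \<and> x \<noteq> y}"

definition bdot :: "nat \<Rightarrow> (nat \<Rightarrow> bit) \<Rightarrow> (nat \<Rightarrow> bit) \<Rightarrow> bit" where
  "bdot n x y = (\<Sum>i<n. x i * y i)"

definition dual_code :: "nat \<Rightarrow> (nat \<Rightarrow> bit) set \<Rightarrow> (nat \<Rightarrow> bit) set" where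
  "dual_code n C = {y \<in> bvecs n. \<forall>x\<in>C. bdot n x y = 0}"

text \<open>A matrix is a list of rows; its row space over GF(2) is the set of sums of sub-multisets
  (subsets of row indices) of rows.\<close>
definition row_span :: "(nat \<Rightarrow> bit) list \<Rightarrow> (nat \<Rightarrow> bit) set" where
  "row_span H = {(\<Sum>i\<in>S. H ! i) | S. S \<subseteq> {..<length H}}"

definition parity_check_matrix :: "nat \<Rightarrow> (nat \<Rightarrow> bit) set \<Rightarrow> (nat \<Rightarrow> bit) list \<Rightarrow> bool" where
  "parity_check_matrix n C H \<longleftrightarrow> set H \<subseteq> bvecs n \<and> row_span H = dual_code n C"

definition stopping_ok :: "nat \<Rightarrow> (nat \<Rightarrow> bit) list \<Rightarrow> nat \<Rightarrow> bool" where
  "stopping_ok n H s \<longleftrightarrow> (\<forall>S. S \<subseteq> {..<n} \<and> S \<noteq> {} \<and> card S < s \<longrightarrow>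
       (\<exists>h\<in>set H. card {j \<in> S. h j \<noteq> 0} = 1))"

definition stopping_distance :: "nat \<Rightarrow> (nat \<Rightarrow> bit) list \<Rightarrow> nat" where
  "stopping_distance n H = (GREATEST s. stopping_ok n H s)"

definition redundancy :: "nat \<Rightarrow> (nat \<Rightarrow> bit) set \<Rightarrow> nat" where
  "redundancy n C = (LEAST m. \<exists>H. parity_check_matrix n C H \<and> length H = m)"

definition stopping_redundancy :: "nat \<Rightarrow> (nat \<Rightarrow> bit) set \<Rightarrow> nat" where
  "stopping_redundancy n C = (LEAST m. \<exists>H. parity_check_matrix n C H \<and> length H = m
      \<and> stopping_distance n H = min_dist n C)"

end

theory Submission
  imports Defs "HOL.Vector_Spaces"
begin

text \<open>
  Fix a parity-check matrix \<open>H\<^sub>0\<close> with \<open>r = r(C)\<close> rows, let \<open>d = d(C)\<close>, and let \<open>H\<close> consist of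
  all sums of between \<open>1\<close> and \<open>d - 2\<close> rows of \<open>H\<^sub>0\<close>; its rows still span the dual code.
  Take a nonempty set \<open>S\<close> of fewer than \<open>d\<close> columns. No nonzero codeword is supported in \<open>S\<close>,
  so by biduality the rows of \<open>H\<^sub>0\<close> projected onto \<open>S\<close> span \<open>GF(2)\<^sup>S\<close>. A basis chosen among
  these projected rows has at most \<open>d - 1\<close> elements, and every unit vector of \<open>GF(2)\<^sup>S\<close> is the
  sum of a subset of it. Two distinct unit vectors cannot both need the whole basis, so some unit
  vector is the sum of at most \<open>d - 2\<close> projected rows: this is a row of \<open>H\<close> of weight one on \<open>S\<close>.
  Conversely, a dual codeword meets the support of a codeword in an even number of positions, so
  the support of a minimum-weight codeword is a stopping set and \<open>s(H) = d\<close>.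
\<close>

declare add_bit_eq_xor [simp del] mult_bit_eq_and [simp del]

lemma sum_apply: "(\<Sum>i\<in>A. f i) x = (\<Sum>i\<in>A. f i x :: 'b::comm_monoid_add)"
  by (induction A rule: infinite_finite_induct) auto

lemma sum_bit_eq_of_nat_card:
  assumes "finite S"
  shows "(\<Sum>i\<in>S. h i :: bit) = of_nat (card {i\<in>S. h i \<noteq> 0})"
proof -
  have "(\<Sum>i\<in>S. h i) = (\<Sum>i\<in>{i\<in>S. h i \<noteq> 0}. h i)"
    using assms by (intro sum.mono_neutral_right) auto
  also have "\<dots> = (\<Sum>i\<in>{i\<in>S. h i \<noteq> 0}. 1)"
    by (intro sum.cong) auto
  finally show ?thesis
    by simp
qed

subsection \<open>The vector space \<open>GF(2)\<^sup>n\<close>\<close>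

definition bscale :: "bit \<Rightarrow> (nat \<Rightarrow> bit) \<Rightarrow> nat \<Rightarrow> bit" where
  "bscale a v = (\<lambda>i. a * v i)"

interpretation bv: vector_space bscale
  by unfold_locales (auto simp: bscale_def fun_eq_iff algebra_simps)

interpretation gf2: vector_space "(*) :: bit \<Rightarrow> bit \<Rightarrow> bit"
  by unfold_locales (auto simp: algebra_simps)

interpretation bv_gf2: vector_space_pair bscale "(*) :: bit \<Rightarrow> bit \<Rightarrow> bit" ..

lemma bscale_eq_if: "bscale a v = (if a = 1 then v else 0)"
  by (cases a) (auto simp: bscale_def fun_eq_iff)

lemma subspace_iff_add_closed: "bv.subspace W \<longleftrightarrow> 0 \<in> W \<and> (\<forall>x\<in>W. \<forall>y\<in>W. x + y \<in> W)"
  by (auto simp: bv.subspace_def bscale_eq_if)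

lemma bit_fun_add_eq_0_iff: "(x :: 'a \<Rightarrow> bit) + y = 0 \<longleftrightarrow> x = y"
proof -
  have "x i + y i = 0 \<longleftrightarrow> x i = y i" for i
    by (cases "x i"; cases "y i") simp_all
  then show ?thesis
    by (simp add: fun_eq_iff)
qed

lemma fun_add_self_bit [simp]: "(x :: 'a \<Rightarrow> bit) + x = 0"
  by (rule bit_fun_add_eq_0_iff[THEN iffD2, OF refl])

lemma span_image_eq_subset_sums:
  "bv.span (f ` I) = {(\<Sum>i\<in>T. f i) | T. T \<subseteq> I \<and> finite T}"
proof
  show "bv.span (f ` I) \<subseteq> {(\<Sum>i\<in>T. f i) | T. T \<subseteq> I \<and> finite T}"
  proof
    fix v assume "v \<in> bv.span (f ` I)"
    then show "v \<in> {(\<Sum>i\<in>T. f i) | T. T \<subseteq> I \<and> finite T}"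
    proof (induction rule: bv.span_induct_alt)
      case base
      show ?case
        by (intro CollectI exI[of _ "{}"]) simp
    next
      case (step c x y)
      then obtain i T where i: "i \<in> I" "x = f i" and T: "T \<subseteq> I" "finite T" "y = (\<Sum>i\<in>T. f i)"
        by blast
      show ?case
      proof (cases "c = 1")
        case False
        then show ?thesis
          using step.IH by (simp add: bscale_eq_if)
      next
        case True
        show ?thesis
        proof (cases "i \<in> T")
          case True
          have "f i + y = f i + (f i + (\<Sum>i\<in>T - {i}. f i))"
            using T True by (simp add: sum.remove)
          also have "\<dots> = (\<Sum>i\<in>T - {i}. f i)"
            by (simp flip: add.assoc)
          finally show ?thesis
            using \<open>c = 1\<close> i T by (intro CollectI exI[of _ "T - {i}"]) (auto simp: bscale_eq_if)
        next
          case False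
          then have "f i + y = (\<Sum>i\<in>insert i T. f i)"
            using T by simp
          then show ?thesis
            using \<open>c = 1\<close> i T by (intro CollectI exI[of _ "insert i T"]) (auto simp: bscale_eq_if)
        qed
      qed
    qed
  qed
  show "{(\<Sum>i\<in>T. f i) | T. T \<subseteq> I \<and> finite T} \<subseteq> bv.span (f ` I)"
  proof clarify
    fix T assume "T \<subseteq> I"
    then show "(\<Sum>i\<in>T. f i) \<in> bv.span (f ` I)"
      by (intro bv.span_sum) (auto intro: bv.span_base)
  qed
qed

definition unit_vec :: "nat \<Rightarrow> nat \<Rightarrow> bit" where
  "unit_vec j = (\<lambda>k. if k = j then 1 else 0)"

lemma unit_vec_eq_iff: "unit_vec i = unit_vec j \<longleftrightarrow> i = j"
  by (auto simp: unit_vec_def fun_eq_iff)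

lemma unit_vec_neq_0: "unit_vec j \<noteq> 0"
  by (auto simp: unit_vec_def fun_eq_iff)

definition proj :: "nat set \<Rightarrow> (nat \<Rightarrow> bit) \<Rightarrow> nat \<Rightarrow> bit" where
  "proj S v = (\<lambda>k. if k \<in> S then v k else 0)"

lemma linear_proj: "Vector_Spaces.linear bscale bscale (proj S)"
  by unfold_locales (auto simp: proj_def bscale_def fun_eq_iff)

lemma proj_eq_sum_unit_vec:
  assumes "finite S"
  shows "proj S v = (\<Sum>k\<in>S. bscale (v k) (unit_vec k))"
proof
  fix i
  have "(\<Sum>k\<in>S. bscale (v k) (unit_vec k)) i = (\<Sum>k\<in>S. if k = i then v i else 0)"
    unfolding sum_apply by (intro sum.cong) (auto simp: bscale_def unit_vec_def)
  then show "proj S v i = (\<Sum>k\<in>S. bscale (v k) (unit_vec k)) i"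
    using assms by (simp add: proj_def)
qed

lemma proj_in_span_unit_vec: "finite S \<Longrightarrow> proj S v \<in> bv.span (unit_vec ` S)"
  unfolding proj_eq_sum_unit_vec by (intro bv.span_sum bv.span_scale bv.span_base) auto

lemma proj_lessThan: "v \<in> bvecs n \<Longrightarrow> proj {..<n} v = v"
  by (auto simp: proj_def bvecs_def fun_eq_iff)

lemma bvecs_eq_span_unit_vec: "bvecs n = bv.span (unit_vec ` {..<n})"
proof
  show "bvecs n \<subseteq> bv.span (unit_vec ` {..<n})"
    using proj_in_span_unit_vec[of "{..<n}"] proj_lessThan by (metis finite_lessThan subsetI)
  have "bv.subspace (bvecs n)"
    by (auto simp: subspace_iff_add_closed bvecs_def)
  moreover have "unit_vec ` {..<n} \<subseteq> bvecs n"
    by (auto simp: bvecs_def unit_vec_def)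
  ultimately show "bv.span (unit_vec ` {..<n}) \<subseteq> bvecs n"
    by (rule bv.span_minimal[rotated])
qed

lemma bvecs_eq_image_Pow: "bvecs n = (\<lambda>T i. of_bool (i \<in> T)) ` Pow {..<n}"
proof
  show "bvecs n \<subseteq> (\<lambda>T i. of_bool (i \<in> T)) ` Pow {..<n}"
  proof
    fix v assume v: "v \<in> bvecs n"
    then have "v = (\<lambda>i. of_bool (i \<in> {i. i < n \<and> v i = 1}))"
      by (auto simp: bvecs_def fun_eq_iff not_less)
    then show "v \<in> (\<lambda>T i. of_bool (i \<in> T)) ` Pow {..<n}"
      by (rule image_eqI) auto
  qed
qed (auto simp: bvecs_def)

lemma card_bvecs: "card (bvecs n) = 2 ^ n"
proof -
  have "inj_on (\<lambda>T i. of_bool (i \<in> T) :: bit) (Pow {..<n})"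
    by (auto intro!: inj_onI simp: fun_eq_iff of_bool_eq_iff)
  then show ?thesis
    by (simp add: bvecs_eq_image_Pow card_image card_Pow)
qed

lemma finite_bvecs: "finite (bvecs n)"
  by (simp add: bvecs_eq_image_Pow)

subsection \<open>Duality\<close>

lemma bdot_comm: "bdot n x y = bdot n y x"
  unfolding bdot_def by (simp only: mult.commute)

lemma bdot_eq_of_nat_card: "bdot n x y = of_nat (card {i. i < n \<and> x i \<noteq> 0 \<and> y i \<noteq> 0})"
proof -
  have "bdot n x y = of_nat (card {i\<in>{..<n}. x i * y i \<noteq> 0})"
    unfolding bdot_def by (rule sum_bit_eq_of_nat_card) simp
  also have "{i\<in>{..<n}. x i * y i \<noteq> 0} = {i. i < n \<and> x i \<noteq> 0 \<and> y i \<noteq> 0}"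
    by auto
  finally show ?thesis .
qed

lemma bdot_proj: "bdot n (proj S x) y = bdot n x (proj S y)"
  unfolding bdot_def proj_def by (intro sum.cong) auto

lemma bdot_unit_vec:
  assumes "j < n"
  shows "bdot n (unit_vec j) z = z j"
proof -
  have "bdot n (unit_vec j) z = (\<Sum>i<n. if i = j then z j else 0)"
    unfolding bdot_def unit_vec_def by (intro sum.cong) auto
  then show ?thesis
    using assms by simp
qed

lemma subspace_dual_code: "bv.subspace (dual_code n C)"
  unfolding subspace_iff_add_closed dual_code_def bvecs_def bdot_def
  by (auto simp: distrib_left sum.distrib)

lemma subspace_code: "binary_linear_code n C \<Longrightarrow> bv.subspace C"
  unfolding binary_linear_code_def bv.subspace_def bscale_def zero_fun_def by blast

lemma exists_bdot_separating:
  assumes W: "bv.subspace W" "W \<subseteq> bvecs n" and v: "v \<in> bvecs n" "v \<notin> W"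
  shows "\<exists>z\<in>bvecs n. (\<forall>w\<in>W. bdot n w z = 0) \<and> bdot n v z = 1"
proof -
  obtain B where B: "B \<subseteq> W" "bv.independent B" "W \<subseteq> bv.span B"
    using bv.maximal_independent_subset by blast
  have "v \<notin> bv.span B"
    using bv.span_minimal[OF B(1) W(1)] v(2) by blast
  then have indep: "bv.independent (insert v B)"
    using bv.independent_insertI B(2) by blast
  obtain g where g: "Vector_Spaces.linear bscale (*) g"
    and g_on: "\<forall>x\<in>insert v B. g x = (if x = v then 1 else 0)"
    using bv_gf2.linear_independent_extend[OF indep, of "\<lambda>x. if x = v then 1 else 0"] by blast
  interpret g: Vector_Spaces.linear bscale "(*)" g by fact
  have "B \<subseteq> {x. g x = 0}"
    using g_on v(2) B(1) by auto
  then have g_W: "\<forall>w\<in>W. g w = 0"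
    using bv.span_minimal[OF _ g.subspace_kernel] B(3) by blast
  define z where "z = (\<lambda>i. if i < n then g (unit_vec i) else 0)"
  have g_eq: "g x = bdot n x z" if "x \<in> bvecs n" for x
  proof -
    have "g x = g (\<Sum>i<n. bscale (x i) (unit_vec i))"
      using proj_lessThan[OF that] proj_eq_sum_unit_vec[of "{..<n}" x] by simp
    also have "\<dots> = bdot n x z"
      unfolding bdot_def z_def by (simp add: g.sum g.scale)
    finally show ?thesis .
  qed
  have "z \<in> bvecs n"
    by (auto simp: z_def bvecs_def)
  moreover have "\<forall>w\<in>W. bdot n w z = 0"
    using g_W g_eq W(2) by (metis subsetD)
  moreover have "bdot n v z = 1"
    using g_eq[OF v(1)] g_on by simp
  ultimately show ?thesis
    by blast
qed

lemma dual_code_dual_code: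
  assumes C: "binary_linear_code n C"
  shows "dual_code n (dual_code n C) = C"
proof
  have "C \<subseteq> bvecs n"
    using C by (simp add: binary_linear_code_def)
  then show "C \<subseteq> dual_code n (dual_code n C)"
    by (auto simp: dual_code_def bdot_comm[of n _ c for c])
  show "dual_code n (dual_code n C) \<subseteq> C"
  proof
    fix c assume c: "c \<in> dual_code n (dual_code n C)"
    show "c \<in> C"
    proof (rule ccontr)
      assume "c \<notin> C"
      moreover have "c \<in> bvecs n"
        using c by (simp add: dual_code_def)
      ultimately obtain z where z: "z \<in> bvecs n" "\<forall>w\<in>C. bdot n w z = 0" "bdot n c z = 1"
        using exists_bdot_separating[OF subspace_code[OF C] \<open>C \<subseteq> bvecs n\<close>] by blast
      then have "z \<in> dual_code n C"
        by (simp add: dual_code_def)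
      then have "bdot n z c = 0"
        using c by (simp add: dual_code_def)
      then show False
        using z(3) by (metis bdot_comm zero_neq_one)
    qed
  qed
qed

lemma row_span_eq_span: "row_span H = bv.span (set H)"
proof -
  have "row_span H = {(\<Sum>i\<in>T. H ! i) | T. T \<subseteq> {..<length H} \<and> finite T}"
    unfolding row_span_def by (auto intro: finite_subset)
  also have "\<dots> = bv.span ((!) H ` {..<length H})"
    by (rule span_image_eq_subset_sums[symmetric])
  also have "(!) H ` {..<length H} = set H"
    by (auto simp: in_set_conv_nth)
  finally show ?thesis .
qed

lemma card_row_span_le: "card (row_span H) \<le> 2 ^ length H"
proof -
  have "row_span H = (\<lambda>S. \<Sum>i\<in>S. H ! i) ` Pow {..<length H}"
    unfolding row_span_def by auto
  then have "card (row_span H) \<le> card (Pow {..<length H})"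
    by (metis card_image_le finite_Pow_iff finite_lessThan)
  then show ?thesis
    by (simp add: card_Pow)
qed

lemma redundancy_attained: "\<exists>H. parity_check_matrix n C H \<and> length H = redundancy n C"
proof -
  have "dual_code n C \<subseteq> bvecs n"
    by (auto simp: dual_code_def)
  then obtain L where L: "set L = dual_code n C"
    using finite_list finite_bvecs finite_subset by metis
  then have "parity_check_matrix n C L"
    using \<open>dual_code n C \<subseteq> bvecs n\<close> subspace_dual_code
    by (simp add: parity_check_matrix_def row_span_eq_span)
  then have "\<exists>m H. parity_check_matrix n C H \<and> length H = m"
    by blast
  then show ?thesis
    unfolding redundancy_def by (rule LeastI_ex)
qed

definition row_sums :: "(nat \<Rightarrow> bit) list \<Rightarrow> nat \<Rightarrow> (nat \<Rightarrow> bit) set" where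
  "row_sums H m = (\<lambda>T. \<Sum>i\<in>T. H ! i) ` {T. T \<subseteq> {..<length H} \<and> 1 \<le> card T \<and> card T \<le> m}"

lemma card_subsets_card_between:
  assumes "finite A"
  shows "card {T. T \<subseteq> A \<and> k \<le> card T \<and> card T \<le> m} = (\<Sum>i=k..m. card A choose i)"
proof -
  have "{T. T \<subseteq> A \<and> k \<le> card T \<and> card T \<le> m} = (\<Union>i\<in>{k..m}. {T. T \<subseteq> A \<and> card T = i})"
    by auto
  also have "card \<dots> = (\<Sum>i=k..m. card {T. T \<subseteq> A \<and> card T = i})"
    using assms by (intro card_UN_disjoint) (auto intro: finite_subset[of _ "Pow A"])
  also have "\<dots> = (\<Sum>i=k..m. card A choose i)"
    using assms by (simp add: n_subsets)
  finally show ?thesis .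
qed

lemma finite_row_sums: "finite (row_sums H m)"
  unfolding row_sums_def by (auto intro: finite_subset[of _ "Pow {..<length H}"])

lemma card_row_sums_le: "card (row_sums H m) \<le> (\<Sum>i=1..m. length H choose i)"
proof -
  have "card (row_sums H m) \<le> card {T. T \<subseteq> {..<length H} \<and> 1 \<le> card T \<and> card T \<le> m}"
    unfolding row_sums_def by (rule card_image_le) (auto intro: finite_subset[of _ "Pow {..<length H}"])
  then show ?thesis
    by (simp add: card_subsets_card_between)
qed

lemma row_sums_subset_row_span: "row_sums H m \<subseteq> row_span H"
  unfolding row_sums_def row_span_def by auto

lemma set_subset_row_sums: "1 \<le> m \<Longrightarrow> set H \<subseteq> row_sums H m"
  unfolding row_sums_def by (force simp: in_set_conv_nth intro: image_eqI[of _ _ "{_}"])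

subsection \<open>Unit vectors as short sums of projected rows\<close>

lemma unit_vec_in_proj_dual_code:
  assumes C: "binary_linear_code n C" and S: "S \<subseteq> {..<n}" "j \<in> S"
    and no_codeword: "\<forall>c\<in>C. (\<forall>k. k \<notin> S \<longrightarrow> c k = 0) \<longrightarrow> c = 0"
  shows "unit_vec j \<in> proj S ` dual_code n C"
proof (rule ccontr)
  assume not_in: "unit_vec j \<notin> proj S ` dual_code n C"
  interpret p: Vector_Spaces.linear bscale bscale "proj S"
    by (rule linear_proj)
  have W: "proj S ` dual_code n C \<subseteq> bvecs n"
    using S by (auto simp: proj_def bvecs_def)
  have v: "unit_vec j \<in> bvecs n"
    using S by (auto simp: unit_vec_def bvecs_def)
  obtain z where z: "z \<in> bvecs n" "\<forall>w\<in>proj S ` dual_code n C. bdot n w z = 0"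
    "bdot n (unit_vec j) z = 1"
    using exists_bdot_separating[OF p.subspace_image[OF subspace_dual_code] W v not_in] by blast
  have "bdot n y (proj S z) = 0" if "y \<in> dual_code n C" for y
    using z(2) that by (simp add: bdot_proj[symmetric])
  moreover have "proj S z \<in> bvecs n"
    using S by (auto simp: proj_def bvecs_def)
  ultimately have "proj S z \<in> dual_code n (dual_code n C)"
    unfolding dual_code_def[of _ "dual_code n C"] by blast
  then have "proj S z \<in> C"
    using dual_code_dual_code[OF C] by simp
  moreover have "proj S z j = 1"
    using z(3) S by (auto simp: bdot_unit_vec proj_def)
  ultimately show False
    using no_codeword by (force simp: proj_def fun_eq_iff)
qed

lemma obtain_independent_subfamily:
  obtains J where "J \<subseteq> I" "inj_on f J" "bv.independent (f ` J)" "bv.span (f ` J) = bv.span (f ` I)"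
proof -
  obtain B where B: "B \<subseteq> f ` I" "bv.independent B" "f ` I \<subseteq> bv.span B"
    using bv.maximal_independent_subset by blast
  obtain J where J: "J \<subseteq> I" "inj_on f J" "B = f ` J"
    using B(1) subset_image_inj by metis
  have "bv.span B \<subseteq> bv.span (f ` I)"
    using B(1) by (rule bv.span_mono)
  moreover have "bv.span (f ` I) \<subseteq> bv.span B"
    using B(3) by (rule bv.span_minimal) simp
  ultimately have "bv.span B = bv.span (f ` I)"
    by (rule equalityI)
  with J B(2) show ?thesis
    using that[of J] by simp
qed

lemma obtain_small_subset_sum_eq_unit_vec:
  assumes S: "finite S" "S \<noteq> {}" "card S \<le> m + 1" and m: "1 \<le> m"
    and units: "unit_vec ` S \<subseteq> bv.span (f ` I)"
    and supp: "f ` I \<subseteq> bv.span (unit_vec ` S)"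
  obtains T j where "T \<subseteq> I" "card T \<le> m" "j \<in> S" "(\<Sum>i\<in>T. f i) = unit_vec j"
proof -
  obtain J where J: "J \<subseteq> I" "inj_on f J" "bv.independent (f ` J)"
    and span_J: "bv.span (f ` J) = bv.span (f ` I)"
    by (rule obtain_independent_subfamily)
  have "f ` J \<subseteq> bv.span (unit_vec ` S)"
    using J(1) supp by blast
  then have "finite (f ` J)" "card (f ` J) \<le> card (unit_vec ` S)"
    using bv.independent_span_bound[OF finite_imageI[OF S(1)] J(3)] by auto
  then have J_fin: "finite J" and J_card: "card J \<le> card S"
    using J(2) card_image_le[OF S(1), of unit_vec] by (auto simp: card_image finite_image_iff)
  have sum_T: "\<exists>T\<subseteq>J. (\<Sum>i\<in>T. f i) = unit_vec j" if "j \<in> S" for j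
  proof -
    have "unit_vec j \<in> bv.span (f ` J)"
      using units that span_J by blast
    then show ?thesis
      unfolding span_image_eq_subset_sums by auto
  qed
  show ?thesis
  proof (cases "card J \<le> m")
    case True
    obtain j where j: "j \<in> S"
      using S(2) by blast
    then obtain T where T: "T \<subseteq> J" "(\<Sum>i\<in>T. f i) = unit_vec j"
      using sum_T by blast
    have "card T \<le> m"
      using card_mono[OF J_fin T(1)] True by linarith
    then show ?thesis
      using that[of T j] T j J(1) by auto
  next
    case False
    then have J_card_eq: "card J = m + 1"
      using J_card S(3) by linarith
    then have "\<not> card S \<le> Suc 0"
      using J_card m by linarith
    then obtain j1 j2 where j: "j1 \<in> S" "j2 \<in> S" "j1 \<noteq> j2"
      using card_le_Suc0_iff_eq[OF S(1)] by blast
    obtain T1 T2 where T: "T1 \<subseteq> J" "(\<Sum>i\<in>T1. f i) = unit_vec j1"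
      "T2 \<subseteq> J" "(\<Sum>i\<in>T2. f i) = unit_vec j2"
      using sum_T j(1,2) by metis
    have "T1 \<noteq> J \<or> T2 \<noteq> J"
      using T(2,4) j(3) by (auto simp: unit_vec_eq_iff)
    then have "T1 \<subset> J \<or> T2 \<subset> J"
      using T(1,3) by blast
    then have "card T1 \<le> m \<or> card T2 \<le> m"
      using psubset_card_mono[OF J_fin] J_card_eq by (metis less_Suc_eq_le Suc_eq_plus1)
    then show ?thesis
      using that[of T1 j1] that[of T2 j2] T j(1,2) J(1) by auto
  qed
qed

subsection \<open>Stopping distance\<close>

lemma hamming_weight_add: "hamming_weight n (x + y) = hamming_dist n x y"
proof -
  have "(x + y) i \<noteq> 0 \<longleftrightarrow> x i \<noteq> y i" for i
    by (cases "x i"; cases "y i") simp_all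
  then show ?thesis
    by (simp add: hamming_weight_def hamming_dist_def)
qed

lemma min_dist_le_hamming_weight:
  assumes C: "binary_linear_code n C" and c: "c \<in> C" "c \<noteq> 0"
  shows "min_dist n C \<le> hamming_weight n c"
proof -
  have "0 \<in> C"
    using subspace_code[OF C] bv.subspace_0 by blast
  then have "hamming_dist n c 0 \<in> {hamming_dist n x y | x y. x \<in> C \<and> y \<in> C \<and> x \<noteq> y}"
    using c by blast
  then have "min_dist n C \<le> hamming_dist n c 0"
    unfolding min_dist_def Inf_nat_def by (rule Least_le)
  then show ?thesis
    using hamming_weight_add[of n c 0] by simp
qed

lemma exists_min_weight_codeword:
  assumes C: "binary_linear_code n C" and c: "c \<in> C" "c \<noteq> 0"
  shows "\<exists>c\<in>C. c \<noteq> 0 \<and> hamming_weight n c = min_dist n C"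
proof -
  have "0 \<in> C"
    using subspace_code[OF C] bv.subspace_0 by blast
  then have "{hamming_dist n x y | x y. x \<in> C \<and> y \<in> C \<and> x \<noteq> y} \<noteq> {}"
    using c by blast
  then have "min_dist n C \<in> {hamming_dist n x y | x y. x \<in> C \<and> y \<in> C \<and> x \<noteq> y}"
    unfolding min_dist_def by (rule Inf_nat_def1)
  then obtain x y where xy: "x \<in> C" "y \<in> C" "x \<noteq> y" "hamming_dist n x y = min_dist n C"
    by auto
  have "x + y \<in> C"
    using subspace_code[OF C] xy(1,2) by (simp add: subspace_iff_add_closed)
  moreover have "x + y \<noteq> 0"
    using xy(3) by (simp add: bit_fun_add_eq_0_iff)
  moreover have "hamming_weight n (x + y) = min_dist n C"
    using xy(4) by (simp add: hamming_weight_add)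
  ultimately show ?thesis
    by blast
qed

lemma stopping_ok_le_hamming_weight:
  assumes C: "binary_linear_code n C" and H: "set H \<subseteq> dual_code n C"
    and s: "stopping_ok n H s" and c: "c \<in> C" "c \<noteq> 0"
  shows "s \<le> hamming_weight n c"
proof (rule ccontr)
  assume "\<not> s \<le> hamming_weight n c"
  define S where "S = {i. i < n \<and> c i \<noteq> 0}"
  have "c \<in> bvecs n"
    using C c by (auto simp: binary_linear_code_def)
  then have "S \<noteq> {}"
    using c(2) by (auto simp: S_def bvecs_def fun_eq_iff not_less)
  moreover have "S \<subseteq> {..<n}" "card S < s"
    using \<open>\<not> s \<le> hamming_weight n c\<close> by (auto simp: S_def hamming_weight_def)
  ultimately obtain h where h: "h \<in> set H" "card {j \<in> S. h j \<noteq> 0} = 1"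
    using s unfolding stopping_ok_def by blast
  have "{i. i < n \<and> c i \<noteq> 0 \<and> h i \<noteq> 0} = {j \<in> S. h j \<noteq> 0}"
    by (auto simp: S_def)
  then have "bdot n c h = 1"
    using h(2) by (simp add: bdot_eq_of_nat_card)
  moreover have "bdot n c h = 0"
    using H h(1) c(1) by (auto simp: dual_code_def)
  ultimately show False
    by simp
qed

lemma hamming_weight_le_card:
  assumes "finite S" "\<forall>k. k \<notin> S \<longrightarrow> c k = 0"
  shows "hamming_weight n c \<le> card S"
  unfolding hamming_weight_def using assms by (intro card_mono) auto

lemma span_proj_nth_eq_proj_row_span:
  "bv.span ((\<lambda>i. proj S (H ! i)) ` {..<length H}) = proj S ` row_span H"
proof -
  interpret p: Vector_Spaces.linear bscale bscale "proj S"
    by (rule linear_proj)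
  have "(\<lambda>i. proj S (H ! i)) ` {..<length H} = proj S ` ((!) H ` {..<length H})"
    by (simp add: image_image)
  also have "(!) H ` {..<length H} = set H"
    by (auto simp: in_set_conv_nth)
  finally have "(\<lambda>i. proj S (H ! i)) ` {..<length H} = proj S ` set H" .
  then show ?thesis
    by (simp add: p.span_image row_span_eq_span)
qed

lemma sum_nth_in_row_sums:
  assumes "T \<subseteq> {..<length H}" "T \<noteq> {}" "card T \<le> m"
  shows "(\<Sum>i\<in>T. H ! i) \<in> row_sums H m"
proof -
  have "1 \<le> card T"
    using assms(1,2) finite_subset[OF assms(1)] by (simp add: Suc_le_eq card_gt_0_iff)
  then show ?thesis
    using assms unfolding row_sums_def by blast
qed

lemma card_nonzero_eq_1_if_proj_eq_unit_vec:
  assumes "proj S h = unit_vec j" "j \<in> S"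
  shows "card {k \<in> S. h k \<noteq> 0} = 1"
proof -
  have "h k = unit_vec j k" if "k \<in> S" for k
    using fun_cong[OF assms(1), of k] that by (simp add: proj_def)
  then have "{k \<in> S. h k \<noteq> 0} = {j}"
    using assms(2) by (auto simp: unit_vec_def split: if_splits)
  then show ?thesis
    by simp
qed

lemma stopping_ok_of_row_sums:
  assumes C: "binary_linear_code n C" and H0: "row_span H0 = dual_code n C"
    and weight: "\<forall>c\<in>C. c \<noteq> 0 \<longrightarrow> m + 2 \<le> hamming_weight n c" and m: "1 \<le> m"
    and H: "row_sums H0 m \<subseteq> set H"
  shows "stopping_ok n H (m + 2)"
  unfolding stopping_ok_def
proof (intro allI impI)
  fix S assume "S \<subseteq> {..<n} \<and> S \<noteq> {} \<and> card S < m + 2"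
  then have S: "S \<subseteq> {..<n}" "S \<noteq> {}" "card S \<le> m + 1" and S_fin: "finite S"
    using finite_subset by auto
  interpret p: Vector_Spaces.linear bscale bscale "proj S"
    by (rule linear_proj)
  have "\<forall>c\<in>C. (\<forall>k. k \<notin> S \<longrightarrow> c k = 0) \<longrightarrow> c = 0"
  proof (intro ballI impI, rule ccontr)
    fix c assume c: "c \<in> C" "\<forall>k. k \<notin> S \<longrightarrow> c k = 0" "c \<noteq> 0"
    then have "m + 2 \<le> hamming_weight n c"
      using weight by blast
    then show False
      using hamming_weight_le_card[OF S_fin c(2), of n] S(3) by linarith
  qed
  then have "unit_vec ` S \<subseteq> bv.span ((\<lambda>i. proj S (H0 ! i)) ` {..<length H0})"
    using unit_vec_in_proj_dual_code[OF C S(1)]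
    by (auto simp: span_proj_nth_eq_proj_row_span H0)
  moreover have "(\<lambda>i. proj S (H0 ! i)) ` {..<length H0} \<subseteq> bv.span (unit_vec ` S)"
    by (auto intro: proj_in_span_unit_vec[OF S_fin])
  ultimately obtain T j where T: "T \<subseteq> {..<length H0}" "card T \<le> m" "j \<in> S"
    and sum_T: "(\<Sum>i\<in>T. proj S (H0 ! i)) = unit_vec j"
    by (rule obtain_small_subset_sum_eq_unit_vec[OF S_fin S(2,3) m])
  define h where "h = (\<Sum>i\<in>T. H0 ! i)"
  have proj_h: "proj S h = unit_vec j"
    using sum_T by (simp add: h_def p.sum)
  then have "T \<noteq> {}"
    using unit_vec_neq_0 by (auto simp: h_def)
  then have "h \<in> set H"
    using sum_nth_in_row_sums[OF T(1) _ T(2)] H by (auto simp: h_def)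
  then show "\<exists>h\<in>set H. card {j \<in> S. h j \<noteq> 0} = 1"
    using card_nonzero_eq_1_if_proj_eq_unit_vec[OF proj_h T(3)] by blast
qed

lemma stopping_redundancy_le:
  assumes "parity_check_matrix n C H" "stopping_distance n H = min_dist n C"
  shows "stopping_redundancy n C \<le> length H"
  unfolding stopping_redundancy_def using assms by (intro Least_le) blast

lemma exists_row_sums_matrix:
  assumes C: "binary_linear_code n C" and c: "c \<in> C" "c \<noteq> 0" and d: "3 \<le> min_dist n C"
    and H0: "parity_check_matrix n C H0"
  shows "\<exists>H. parity_check_matrix n C H \<and> stopping_distance n H = min_dist n C
    \<and> length H \<le> (\<Sum>i=1..min_dist n C - 2. length H0 choose i)"
proof -
  define m where "m = min_dist n C - 2"
  have m: "1 \<le> m" "m + 2 = min_dist n C"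
    using d by (auto simp: m_def)
  obtain H where H: "set H = row_sums H0 m" "distinct H"
    using finite_distinct_list[OF finite_row_sums] by blast
  have H0_span: "row_span H0 = dual_code n C"
    using H0 by (simp add: parity_check_matrix_def)
  have H_dual: "set H \<subseteq> dual_code n C"
    using row_sums_subset_row_span[of H0 m] H(1) H0_span by simp
  have "bv.span (set H) = dual_code n C"
  proof (rule antisym)
    show "bv.span (set H) \<subseteq> dual_code n C"
      using H_dual subspace_dual_code by (rule bv.span_minimal)
    have "bv.span (set H0) \<subseteq> bv.span (set H)"
      using set_subset_row_sums[OF m(1)] H(1) by (intro bv.span_mono) simp
    then show "dual_code n C \<subseteq> bv.span (set H)"
      using H0_span by (simp add: row_span_eq_span)
  qed
  then have pcm: "parity_check_matrix n C H"
    using H_dual by (auto simp: parity_check_matrix_def row_span_eq_span dual_code_def)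
  have "\<forall>c\<in>C. c \<noteq> 0 \<longrightarrow> m + 2 \<le> hamming_weight n c"
    using min_dist_le_hamming_weight[OF C] m(2) by simp
  then have "stopping_ok n H (min_dist n C)"
    using stopping_ok_of_row_sums[OF C H0_span _ m(1)] H(1) m(2) by simp
  moreover have "s \<le> min_dist n C" if "stopping_ok n H s" for s
  proof -
    obtain c0 where "c0 \<in> C" "c0 \<noteq> 0" "hamming_weight n c0 = min_dist n C"
      using exists_min_weight_codeword[OF C c] by blast
    then show ?thesis
      using stopping_ok_le_hamming_weight[OF C H_dual that] by metis
  qed
  ultimately have "stopping_distance n H = min_dist n C"
    unfolding stopping_distance_def by (rule Greatest_equality)
  moreover have "length H \<le> (\<Sum>i=1..m. length H0 choose i)"
    using card_row_sums_le[of H0 m] distinct_card[OF H(2)] H(1) by simp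
  ultimately show ?thesis
    using pcm m_def by blast
qed

subsection \<open>The zero code\<close>

definition unit_matrix :: "nat \<Rightarrow> (nat \<Rightarrow> bit) list" where
  "unit_matrix n = map unit_vec [0..<n]"

lemma dual_code_zero_code: "dual_code n {0} = bvecs n"
  by (auto simp: dual_code_def bdot_def)

lemma parity_check_matrix_unit_matrix: "parity_check_matrix n {0} (unit_matrix n)"
proof -
  have "set (unit_matrix n) = unit_vec ` {..<n}"
    by (auto simp: unit_matrix_def)
  then show ?thesis
    unfolding parity_check_matrix_def row_span_eq_span dual_code_zero_code bvecs_eq_span_unit_vec
    using bv.span_superset by simp
qed

lemma stopping_ok_unit_matrix: "stopping_ok n (unit_matrix n) s"
  unfolding stopping_ok_def
proof (intro allI impI)
  fix S assume S: "S \<subseteq> {..<n} \<and> S \<noteq> {} \<and> card S < s"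
  then obtain j where "j \<in> S"
    by blast
  then have "unit_vec j \<in> set (unit_matrix n)" "{k \<in> S. unit_vec j k \<noteq> 0} = {j}"
    using S by (auto simp: unit_matrix_def unit_vec_def)
  then show "\<exists>h\<in>set (unit_matrix n). card {j \<in> S. h j \<noteq> 0} = 1"
    by (intro bexI[of _ "unit_vec j"]) simp_all
qed

text \<open>
  Both sides are junk values: the zero code has no pair of distinct codewords, so its minimum
  distance is \<open>Inf {}\<close>, and every \<open>s\<close> is admissible for the unit matrix, so its stopping distance
  is the \<open>GREATEST\<close> of an unbounded predicate; on \<open>nat\<close> both unfold to \<open>THE x. False\<close>.
\<close>

lemma stopping_distance_unit_matrix: "stopping_distance n (unit_matrix n) = min_dist n {0}"
proof -
  have "stopping_distance n (unit_matrix n) = (THE x::nat. False)"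
    unfolding stopping_distance_def Greatest_def using stopping_ok_unit_matrix
    by (metis Suc_n_not_le_n)
  also have "\<dots> = min_dist n {0}"
    unfolding min_dist_def Inf_nat_def Least_def by simp
  finally show ?thesis .
qed

lemma stopping_redundancy_zero_code_le: "stopping_redundancy n {0} \<le> n"
  using stopping_redundancy_le[OF parity_check_matrix_unit_matrix stopping_distance_unit_matrix]
  by (simp add: unit_matrix_def)

lemma redundancy_zero_code_ge: "n \<le> redundancy n {0}"
proof -
  obtain H where "parity_check_matrix n {0} H" "length H = redundancy n {0}"
    using redundancy_attained by blast
  then have "2 ^ n \<le> (2::nat) ^ redundancy n {0}"
    using card_row_span_le[of H] by (simp add: parity_check_matrix_def dual_code_zero_code card_bvecs)
  then show ?thesis
    by simp
qed

theorem theorem4: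
  fixes n :: nat and C :: "(nat \<Rightarrow> bit) set"
  assumes "binary_linear_code n C"
    and "min_dist n C \<ge> 3"
  shows "stopping_redundancy n C \<le> (\<Sum>i=1..min_dist n C - 2. redundancy n C choose i)"
proof (cases "\<exists>c\<in>C. c \<noteq> 0")
  case True
  then obtain c where c: "c \<in> C" "c \<noteq> 0"
    by blast
  obtain H0 where H0: "parity_check_matrix n C H0" "length H0 = redundancy n C"
    using redundancy_attained by blast
  obtain H where "parity_check_matrix n C H" "stopping_distance n H = min_dist n C"
    "length H \<le> (\<Sum>i=1..min_dist n C - 2. length H0 choose i)"
    using exists_row_sums_matrix[OF assms(1) c assms(2) H0(1)] by blast
  then show ?thesis
    using stopping_redundancy_le[of n C H] H0(2) by simp
next
  case False
  then have C: "C = {0}"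
    using subspace_code[OF assms(1)] bv.subspace_0 by blast
  have "stopping_redundancy n C \<le> redundancy n C choose 1"
    using stopping_redundancy_zero_code_le[of n] redundancy_zero_code_ge[of n] C by simp
  also have "\<dots> \<le> (\<Sum>i=1..min_dist n C - 2. redundancy n C choose i)"
    using assms(2) by (intro member_le_sum) auto
  finally show ?thesis .
qed

end
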